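(* Let $\mathcal{L}=(\mathrm{Fm},\vdash)$ be a logic for which $\wedge_P$, $\vee_S$, $\bot_P$ and $\top_W$ hold, and let $N\subseteq\mathrm{Fm}\times\mathrm{Fm}$ be a normative system. For $1\le i\le4$ let $P_i=P_{N_i}$ and $P_i^c=(\mathrm{Fm}\times\mathrm{Fm})\setminus P_i$. Then $P_1^c$ is closed under $(\top)^{\rhd},(\mathrm{SI})^{\rhd},(\mathrm{WO})^{\rhd},(\mathrm{AND})^{\rhd}$; $P_2^c$ is closed under these and $(\mathrm{OR})^{\rhd}$; $P_3^c$ is closed under $(\top)^{\rhd},(\mathrm{SI})^{\rhd},(\mathrm{WO})^{\rhd},(\mathrm{AND})^{\rhd},(\mathrm{CT})^{\rhd}$; $P_4^c$ is closed under $(\top)^{\rhd},(\mathrm{SI})^{\rhd},(\mathrm{WO})^{\rhd},(\mathrm{AND})^{\rhd},(\mathrm{OR})^{\rhd},(\mathrm{CT})^{\rhd}$, where in $(\mathrm{CT})^{\rhd}$ for $P_i^c$ the normative system referred to is $N_i$.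
   Context: Logic $\mathcal{L}=(\mathrm{Fm},\vdash)$ with consequence relation $\vdash$; $Cn(\Gamma)=\{\psi\mid\Gamma\vdash\psi\}$, $Cn(\varphi,\psi)=Cn(\{\varphi,\psi\})$. $\wedge_P$: a binary term $\wedge$ with $Cn(\varphi\wedge\psi)=Cn(\{\varphi,\psi\})$; $\vee_S$: a binary term $\vee$ with $Cn(\Gamma,\varphi\vee\psi)=Cn(\Gamma\cup\{\varphi\})\cap Cn(\Gamma\cup\{\psi\})$ for all $\Gamma$; $\bot_P$: a constant $\bot$ with $Cn(\{\bot\})=\mathrm{Fm}$; $\top_W$: a constant $\top$ with $\top\in Cn(\{\varphi\})$ for all $\varphi$. Rules on a normative system $N$: $(\top)$: $(\top,\top)\in N$; (SI): $(\alpha,\varphi)\in N,\beta\vdash\alpha\Rightarrow(\beta,\varphi)\in N$; (WO): $(\alpha,\varphi)\in N,\varphi\vdash\psi\Rightarrow(\alpha,\psi)\in N$; (AND): $(\alpha,\varphi),(\alpha,\psi)\in N\Rightarrow(\alpha,\varphi\wedge\psi)\in N$; (OR): $(\alpha,\varphi),(\beta,\varphi)\in N\Rightarrow(\alpha\vee\beta,\varphi)\in N$; (CT): $(\alpha,\varphi),(\alpha\wedge\varphi,\psi)\in N\Rightarrow(\alpha,\psi)\in N$. $N_i$ is the smallest extension of $N$ closed under: $N_1$: $(\top)$,(SI),(WO),(AND); $N_2$: these and (OR); $N_3$: $(\top)$,(SI),(WO),(AND),(CT); $N_4$: all of $(\top)$,(SI),(WO),(AND),(OR),(CT). For a normative system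 $M$, $P_M=\{(\alpha,\varphi)\mid\forall\psi((\alpha,\psi)\in M\Rightarrow Cn(\varphi,\psi)\neq\mathrm{Fm})\}$. Rules on a relation $R$ (relative to a normative system $M$): $(\top)^{\rhd}$: $(\top,\bot)\in R$; $(\mathrm{SI})^{\rhd}$: $(\beta,\varphi)\in R,\alpha\vdash\beta\Rightarrow(\alpha,\varphi)\in R$; $(\mathrm{WO})^{\rhd}$: $(\alpha,\psi)\in R,\varphi\vdash\psi\Rightarrow(\alpha,\varphi)\in R$; $(\mathrm{AND})^{\rhd}$: $(\alpha,\varphi),(\alpha,\psi)\in R\Rightarrow(\alpha,\varphi\vee\psi)\in R$; $(\mathrm{OR})^{\rhd}$: $(\alpha,\varphi),(\beta,\varphi)\in R\Rightarrow(\alpha\vee\beta,\varphi)\in R$; $(\mathrm{CT})^{\rhd}$: $(\alpha,\varphi)\in M,(\alpha\wedge\varphi,\psi)\in R\Rightarrow(\alpha,\psi)\in R$. *)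

theory Defs
  imports Main
begin

text \<open>A logic is given by an abstract type of formulas 'f and a consequence
relation cons :: 'f set => 'f => bool (Gamma |- phi), assumed Tarskian.\<close>

definition Cn :: "('f set \<Rightarrow> 'f \<Rightarrow> bool) \<Rightarrow> 'f set \<Rightarrow> 'f set" where
  "Cn cons \<Gamma> = {\<psi>. cons \<Gamma> \<psi>}"

definition tarskian :: "('f set \<Rightarrow> 'f \<Rightarrow> bool) \<Rightarrow> bool" where
  "tarskian cons \<longleftrightarrow>
     (\<forall>\<Gamma> \<phi>. \<phi> \<in> \<Gamma> \<longrightarrow> cons \<Gamma> \<phi>) \<and>
     (\<forall>\<Gamma> \<Delta> \<phi>. \<Gamma> \<subseteq> \<Delta> \<longrightarrow> cons \<Gamma> \<phi> \<longrightarrow> cons \<Delta> \<phi>) \<and>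
     (\<forall>\<Gamma> \<Delta> \<phi>. (\<forall>\<psi>\<in>\<Delta>. cons \<Gamma> \<psi>) \<longrightarrow> cons \<Delta> \<phi> \<longrightarrow> cons \<Gamma> \<phi>)"

definition conj_P :: "('f set \<Rightarrow> 'f \<Rightarrow> bool) \<Rightarrow> ('f \<Rightarrow> 'f \<Rightarrow> 'f) \<Rightarrow> bool" where
  "conj_P cons cj \<longleftrightarrow> (\<forall>\<phi> \<psi>. Cn cons {cj \<phi> \<psi>} = Cn cons {\<phi>, \<psi>})"

definition disj_S :: "('f set \<Rightarrow> 'f \<Rightarrow> bool) \<Rightarrow> ('f \<Rightarrow> 'f \<Rightarrow> 'f) \<Rightarrow> bool" where
  "disj_S cons dj \<longleftrightarrow> (\<forall>\<Gamma> \<phi> \<psi>.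
     Cn cons (\<Gamma> \<union> {dj \<phi> \<psi>}) = Cn cons (\<Gamma> \<union> {\<phi>}) \<inter> Cn cons (\<Gamma> \<union> {\<psi>}))"

definition bot_P :: "('f set \<Rightarrow> 'f \<Rightarrow> bool) \<Rightarrow> 'f \<Rightarrow> bool" where
  "bot_P cons fb \<longleftrightarrow> Cn cons {fb} = UNIV"

definition top_W :: "('f set \<Rightarrow> 'f \<Rightarrow> bool) \<Rightarrow> 'f \<Rightarrow> bool" where
  "top_W cons ft \<longleftrightarrow> (\<forall>\<phi>. ft \<in> Cn cons {\<phi>})"

definition rule_top :: "'f \<Rightarrow> ('f \<times> 'f) set \<Rightarrow> bool" where
  "rule_top ft N \<longleftrightarrow> (ft, ft) \<in> N"

definition rule_SI :: "('f set \<Rightarrow> 'f \<Rightarrow> bool) \<Rightarrow> ('f \<times> 'f) set \<Rightarrow> bool" where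
  "rule_SI cons N \<longleftrightarrow> (\<forall>\<alpha> \<phi> \<beta>. (\<alpha>, \<phi>) \<in> N \<longrightarrow> cons {\<beta>} \<alpha> \<longrightarrow> (\<beta>, \<phi>) \<in> N)"

definition rule_WO :: "('f set \<Rightarrow> 'f \<Rightarrow> bool) \<Rightarrow> ('f \<times> 'f) set \<Rightarrow> bool" where
  "rule_WO cons N \<longleftrightarrow> (\<forall>\<alpha> \<phi> \<psi>. (\<alpha>, \<phi>) \<in> N \<longrightarrow> cons {\<phi>} \<psi> \<longrightarrow> (\<alpha>, \<psi>) \<in> N)"

definition rule_AND :: "('f \<Rightarrow> 'f \<Rightarrow> 'f) \<Rightarrow> ('f \<times> 'f) set \<Rightarrow> bool" where
  "rule_AND cj N \<longleftrightarrow> (\<forall>\<alpha> \<phi> \<psi>. (\<alpha>, \<phi>) \<in> N \<longrightarrow> (\<alpha>, \<psi>) \<in> N \<longrightarrow> (\<alpha>, cj \<phi> \<psi>) \<in> N)"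

definition rule_OR :: "('f \<Rightarrow> 'f \<Rightarrow> 'f) \<Rightarrow> ('f \<times> 'f) set \<Rightarrow> bool" where
  "rule_OR dj N \<longleftrightarrow> (\<forall>\<alpha> \<beta> \<phi>. (\<alpha>, \<phi>) \<in> N \<longrightarrow> (\<beta>, \<phi>) \<in> N \<longrightarrow> (dj \<alpha> \<beta>, \<phi>) \<in> N)"

definition rule_CT :: "('f \<Rightarrow> 'f \<Rightarrow> 'f) \<Rightarrow> ('f \<times> 'f) set \<Rightarrow> bool" where
  "rule_CT cj N \<longleftrightarrow> (\<forall>\<alpha> \<phi> \<psi>. (\<alpha>, \<phi>) \<in> N \<longrightarrow> (cj \<alpha> \<phi>, \<psi>) \<in> N \<longrightarrow> (\<alpha>, \<psi>) \<in> N)"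

definition smallest_closed :: "(('f \<times> 'f) set \<Rightarrow> bool) \<Rightarrow> ('f \<times> 'f) set \<Rightarrow> ('f \<times> 'f) set" where
  "smallest_closed C N = \<Inter> {M. N \<subseteq> M \<and> C M}"

definition N1 where
  "N1 cons cj ft N = smallest_closed
     (\<lambda>M. rule_top ft M \<and> rule_SI cons M \<and> rule_WO cons M \<and> rule_AND cj M) N"

definition N2 where
  "N2 cons cj dj ft N = smallest_closed
     (\<lambda>M. rule_top ft M \<and> rule_SI cons M \<and> rule_WO cons M \<and> rule_AND cj M \<and> rule_OR dj M) N"

definition N3 where
  "N3 cons cj ft N = smallest_closed
     (\<lambda>M. rule_top ft M \<and> rule_SI cons M \<and> rule_WO cons M \<and> rule_AND cj M \<and> rule_CT cj M) N"

definition N4 where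
  "N4 cons cj dj ft N = smallest_closed
     (\<lambda>M. rule_top ft M \<and> rule_SI cons M \<and> rule_WO cons M \<and> rule_AND cj M \<and> rule_OR dj M
          \<and> rule_CT cj M) N"

definition Perm :: "('f set \<Rightarrow> 'f \<Rightarrow> bool) \<Rightarrow> ('f \<times> 'f) set \<Rightarrow> ('f \<times> 'f) set" where
  "Perm cons M = {(\<alpha>, \<phi>). \<forall>\<psi>. (\<alpha>, \<psi>) \<in> M \<longrightarrow> Cn cons {\<phi>, \<psi>} \<noteq> UNIV}"

definition drule_top :: "'f \<Rightarrow> 'f \<Rightarrow> ('f \<times> 'f) set \<Rightarrow> bool" where
  "drule_top ft fb R \<longleftrightarrow> (ft, fb) \<in> R"

definition drule_SI :: "('f set \<Rightarrow> 'f \<Rightarrow> bool) \<Rightarrow> ('f \<times> 'f) set \<Rightarrow> bool" where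
  "drule_SI cons R \<longleftrightarrow> (\<forall>\<alpha> \<beta> \<phi>. (\<beta>, \<phi>) \<in> R \<longrightarrow> cons {\<alpha>} \<beta> \<longrightarrow> (\<alpha>, \<phi>) \<in> R)"

definition drule_WO :: "('f set \<Rightarrow> 'f \<Rightarrow> bool) \<Rightarrow> ('f \<times> 'f) set \<Rightarrow> bool" where
  "drule_WO cons R \<longleftrightarrow> (\<forall>\<alpha> \<phi> \<psi>. (\<alpha>, \<psi>) \<in> R \<longrightarrow> cons {\<phi>} \<psi> \<longrightarrow> (\<alpha>, \<phi>) \<in> R)"

definition drule_AND :: "('f \<Rightarrow> 'f \<Rightarrow> 'f) \<Rightarrow> ('f \<times> 'f) set \<Rightarrow> bool" where
  "drule_AND dj R \<longleftrightarrow> (\<forall>\<alpha> \<phi> \<psi>. (\<alpha>, \<phi>) \<in> R \<longrightarrow> (\<alpha>, \<psi>) \<in> R \<longrightarrow> (\<alpha>, dj \<phi> \<psi>) \<in> R)"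

definition drule_OR :: "('f \<Rightarrow> 'f \<Rightarrow> 'f) \<Rightarrow> ('f \<times> 'f) set \<Rightarrow> bool" where
  "drule_OR dj R \<longleftrightarrow> (\<forall>\<alpha> \<beta> \<phi>. (\<alpha>, \<phi>) \<in> R \<longrightarrow> (\<beta>, \<phi>) \<in> R \<longrightarrow> (dj \<alpha> \<beta>, \<phi>) \<in> R)"

definition drule_CT :: "('f \<Rightarrow> 'f \<Rightarrow> 'f) \<Rightarrow> ('f \<times> 'f) set \<Rightarrow> ('f \<times> 'f) set \<Rightarrow> bool" where
  "drule_CT cj M R \<longleftrightarrow> (\<forall>\<alpha> \<phi> \<psi>. (\<alpha>, \<phi>) \<in> M \<longrightarrow> (cj \<alpha> \<phi>, \<psi>) \<in> R \<longrightarrow> (\<alpha>, \<psi>) \<in> R)"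

end

theory Submission
  imports Defs
begin

text \<open>A pair \<open>(\<alpha>, \<phi>)\<close> lies outside \<open>P\<^sub>M\<close> exactly when some obligation \<open>(\<alpha>, \<chi>) \<in> M\<close> is
  inconsistent with \<open>\<phi>\<close>, so each dual rule follows by transforming such witnesses.
  \<open>(\<top>, \<top>) \<in> M\<close> is inconsistent with \<open>\<bottom>\<close>; (SI) and (CT) carry a witness over to the new
  context; a witness against \<open>\<psi>\<close> works against everything entailing \<open>\<psi>\<close>, so \<open>(WO)\<^sup>\<rhd>\<close> needs
  no rule of \<open>M\<close>. For \<open>(AND)\<^sup>\<rhd>\<close> the conjunction of the two witnesses is inconsistent with
  either disjunct, hence by \<open>\<vee>\<^sub>S\<close> with the disjunction; for \<open>(OR)\<^sup>\<rhd>\<close>, (WO) and (OR) turn the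
  witnesses \<open>\<chi>\<^sub>1, \<chi>\<^sub>2\<close> into the obligation \<open>(\<alpha> \<vee> \<beta>, \<chi>\<^sub>1 \<vee> \<chi>\<^sub>2)\<close>, inconsistent with \<open>\<phi>\<close> by \<open>\<vee>\<^sub>S\<close>.\<close>

lemma smallest_closed_closed:
  assumes "\<And>S. \<forall>M\<in>S. C M \<Longrightarrow> C (\<Inter>S)"
  shows "C (smallest_closed C N)"
  unfolding smallest_closed_def by (rule assms) blast

lemma rule_top_Inter: "\<forall>M\<in>S. rule_top ft M \<Longrightarrow> rule_top ft (\<Inter>S)"
  unfolding rule_top_def by blast

lemma rule_SI_Inter: "\<forall>M\<in>S. rule_SI cons M \<Longrightarrow> rule_SI cons (\<Inter>S)"
  unfolding rule_SI_def by blast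

lemma rule_WO_Inter: "\<forall>M\<in>S. rule_WO cons M \<Longrightarrow> rule_WO cons (\<Inter>S)"
  unfolding rule_WO_def by blast

lemma rule_AND_Inter: "\<forall>M\<in>S. rule_AND cj M \<Longrightarrow> rule_AND cj (\<Inter>S)"
  unfolding rule_AND_def by blast

lemma rule_OR_Inter: "\<forall>M\<in>S. rule_OR dj M \<Longrightarrow> rule_OR dj (\<Inter>S)"
  unfolding rule_OR_def by blast

lemma rule_CT_Inter: "\<forall>M\<in>S. rule_CT cj M \<Longrightarrow> rule_CT cj (\<Inter>S)"
  unfolding rule_CT_def by blast

lemmas rules_Inter =
  rule_top_Inter rule_SI_Inter rule_WO_Inter rule_AND_Inter rule_OR_Inter rule_CT_Inter

lemma N1_closed:
  "rule_top ft (N1 cons cj ft N) \<and> rule_SI cons (N1 cons cj ft N)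
    \<and> rule_WO cons (N1 cons cj ft N) \<and> rule_AND cj (N1 cons cj ft N)"
  unfolding N1_def by (rule smallest_closed_closed) (intro conjI rules_Inter; blast)

lemma N2_closed:
  "rule_top ft (N2 cons cj dj ft N) \<and> rule_SI cons (N2 cons cj dj ft N)
    \<and> rule_WO cons (N2 cons cj dj ft N) \<and> rule_AND cj (N2 cons cj dj ft N)
    \<and> rule_OR dj (N2 cons cj dj ft N)"
  unfolding N2_def by (rule smallest_closed_closed) (intro conjI rules_Inter; blast)

lemma N3_closed:
  "rule_top ft (N3 cons cj ft N) \<and> rule_SI cons (N3 cons cj ft N)
    \<and> rule_WO cons (N3 cons cj ft N) \<and> rule_AND cj (N3 cons cj ft N)
    \<and> rule_CT cj (N3 cons cj ft N)"
  unfolding N3_def by (rule smallest_closed_closed) (intro conjI rules_Inter; blast)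

lemma N4_closed:
  "rule_top ft (N4 cons cj dj ft N) \<and> rule_SI cons (N4 cons cj dj ft N)
    \<and> rule_WO cons (N4 cons cj dj ft N) \<and> rule_AND cj (N4 cons cj dj ft N)
    \<and> rule_OR dj (N4 cons cj dj ft N) \<and> rule_CT cj (N4 cons cj dj ft N)"
  unfolding N4_def by (rule smallest_closed_closed) (intro conjI rules_Inter; blast)

lemma Compl_Perm_iff:
  "(\<alpha>, \<phi>) \<in> - Perm cons M \<longleftrightarrow> (\<exists>\<psi>. (\<alpha>, \<psi>) \<in> M \<and> Cn cons {\<phi>, \<psi>} = UNIV)"
  unfolding Perm_def by blast

lemma Cn_eq_UNIV_iff: "Cn cons \<Gamma> = UNIV \<longleftrightarrow> (\<forall>\<theta>. cons \<Gamma> \<theta>)"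
  unfolding Cn_def by blast

lemma drule_SI_Compl_Perm: "rule_SI cons M \<Longrightarrow> drule_SI cons (- Perm cons M)"
  unfolding drule_SI_def rule_SI_def Compl_Perm_iff by blast

lemma drule_CT_Compl_Perm: "rule_CT cj M \<Longrightarrow> drule_CT cj M (- Perm cons M)"
  unfolding drule_CT_def rule_CT_def Compl_Perm_iff by blast

context
  fixes cons :: "'f set \<Rightarrow> 'f \<Rightarrow> bool"
  assumes tarskian: "tarskian cons"
begin

lemma cons_refl: "\<phi> \<in> \<Gamma> \<Longrightarrow> cons \<Gamma> \<phi>"
  using tarskian unfolding tarskian_def by simp

lemma cons_mono: "\<Gamma> \<subseteq> \<Delta> \<Longrightarrow> cons \<Gamma> \<phi> \<Longrightarrow> cons \<Delta> \<phi>"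
  using tarskian unfolding tarskian_def by metis

lemma cons_cut: "\<forall>\<psi>\<in>\<Delta>. cons \<Gamma> \<psi> \<Longrightarrow> cons \<Delta> \<phi> \<Longrightarrow> cons \<Gamma> \<phi>"
  using tarskian unfolding tarskian_def by metis

lemma cons_conj_left: "conj_P cons cj \<Longrightarrow> cons {cj \<phi> \<psi>} \<phi>"
  unfolding conj_P_def Cn_def by (metis insertI1 mem_Collect_eq cons_refl)

lemma cons_conj_right: "conj_P cons cj \<Longrightarrow> cons {cj \<phi> \<psi>} \<psi>"
  unfolding conj_P_def Cn_def by (metis insertI1 insert_commute mem_Collect_eq cons_refl)

lemma cons_disj_left: "disj_S cons dj \<Longrightarrow> cons {\<phi>} (dj \<phi> \<psi>)"
  unfolding disj_S_def Cn_def by (metis Int_iff Un_empty_left insertI1 mem_Collect_eq cons_refl)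

lemma cons_disj_right: "disj_S cons dj \<Longrightarrow> cons {\<psi>} (dj \<phi> \<psi>)"
  unfolding disj_S_def Cn_def by (metis Int_iff Un_empty_left insertI1 mem_Collect_eq cons_refl)

lemma inconsistent_bot: "bot_P cons fb \<Longrightarrow> Cn cons {fb, \<phi>} = UNIV"
  unfolding bot_P_def Cn_def by (auto intro: cons_mono[of "{fb}"])

lemma inconsistent_if_entails:
  assumes "cons {\<phi>} \<psi>" and "Cn cons {\<psi>, \<chi>} = UNIV"
  shows "Cn cons {\<phi>, \<chi>} = UNIV"
proof -
  have "cons {\<phi>, \<chi>} \<psi>"
    by (rule cons_mono[OF _ assms(1)]) simp
  moreover have "cons {\<phi>, \<chi>} \<chi>"
    by (rule cons_refl) simp
  ultimately have "\<forall>\<theta>\<in>{\<psi>, \<chi>}. cons {\<phi>, \<chi>} \<theta>"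
    by simp
  then have "cons {\<phi>, \<chi>} \<theta>" for \<theta>
    by (rule cons_cut) (use assms(2) in \<open>simp add: Cn_eq_UNIV_iff\<close>)
  then show ?thesis
    by (simp add: Cn_eq_UNIV_iff)
qed

lemma inconsistent_disj:
  assumes "disj_S cons dj" and "Cn cons {\<phi>, \<chi>} = UNIV" and "Cn cons {\<psi>, \<chi>} = UNIV"
  shows "Cn cons {dj \<phi> \<psi>, \<chi>} = UNIV"
  using assms unfolding disj_S_def by (metis Int_absorb insert_is_Un insert_commute)

lemma drule_top_Compl_Perm:
  assumes "bot_P cons fb" and "rule_top ft M"
  shows "drule_top ft fb (- Perm cons M)"
proof -
  have "(ft, ft) \<in> M" and "Cn cons {fb, ft} = UNIV"
    using assms inconsistent_bot unfolding rule_top_def by simp_all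
  then show ?thesis
    unfolding drule_top_def Compl_Perm_iff by blast
qed

lemma drule_WO_Compl_Perm: "drule_WO cons (- Perm cons M)"
  unfolding drule_WO_def Compl_Perm_iff by (meson inconsistent_if_entails)

lemma drule_AND_Compl_Perm:
  assumes conj: "conj_P cons cj" and disj: "disj_S cons dj" and "rule_AND cj M"
  shows "drule_AND dj (- Perm cons M)"
  unfolding drule_AND_def Compl_Perm_iff
proof (intro allI impI)
  fix \<alpha> \<phi> \<psi>
  assume "\<exists>\<chi>. (\<alpha>, \<chi>) \<in> M \<and> Cn cons {\<phi>, \<chi>} = UNIV"
    and "\<exists>\<chi>. (\<alpha>, \<chi>) \<in> M \<and> Cn cons {\<psi>, \<chi>} = UNIV"
  then obtain \<chi>\<^sub>1 \<chi>\<^sub>2 where \<chi>\<^sub>1: "(\<alpha>, \<chi>\<^sub>1) \<in> M" "Cn cons {\<phi>, \<chi>\<^sub>1} = UNIV"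
    and \<chi>\<^sub>2: "(\<alpha>, \<chi>\<^sub>2) \<in> M" "Cn cons {\<psi>, \<chi>\<^sub>2} = UNIV"
    by blast
  have "Cn cons {cj \<chi>\<^sub>1 \<chi>\<^sub>2, \<phi>} = UNIV"
    by (rule inconsistent_if_entails[OF cons_conj_left[OF conj]])
      (use \<chi>\<^sub>1(2) in \<open>simp add: insert_commute\<close>)
  moreover have "Cn cons {cj \<chi>\<^sub>1 \<chi>\<^sub>2, \<psi>} = UNIV"
    by (rule inconsistent_if_entails[OF cons_conj_right[OF conj]])
      (use \<chi>\<^sub>2(2) in \<open>simp add: insert_commute\<close>)
  ultimately have "Cn cons {dj \<phi> \<psi>, cj \<chi>\<^sub>1 \<chi>\<^sub>2} = UNIV"
    using inconsistent_disj[OF disj] by (simp add: insert_commute)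
  moreover have "(\<alpha>, cj \<chi>\<^sub>1 \<chi>\<^sub>2) \<in> M"
    using \<open>rule_AND cj M\<close> \<chi>\<^sub>1(1) \<chi>\<^sub>2(1) unfolding rule_AND_def by blast
  ultimately show "\<exists>\<chi>. (\<alpha>, \<chi>) \<in> M \<and> Cn cons {dj \<phi> \<psi>, \<chi>} = UNIV"
    by blast
qed

lemma drule_OR_Compl_Perm:
  assumes disj: "disj_S cons dj" and "rule_WO cons M" and "rule_OR dj M"
  shows "drule_OR dj (- Perm cons M)"
  unfolding drule_OR_def Compl_Perm_iff
proof (intro allI impI)
  fix \<alpha> \<beta> \<phi>
  assume "\<exists>\<chi>. (\<alpha>, \<chi>) \<in> M \<and> Cn cons {\<phi>, \<chi>} = UNIV"
    and "\<exists>\<chi>. (\<beta>, \<chi>) \<in> M \<and> Cn cons {\<phi>, \<chi>} = UNIV"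
  then obtain \<chi>\<^sub>1 \<chi>\<^sub>2 where \<chi>\<^sub>1: "(\<alpha>, \<chi>\<^sub>1) \<in> M" "Cn cons {\<phi>, \<chi>\<^sub>1} = UNIV"
    and \<chi>\<^sub>2: "(\<beta>, \<chi>\<^sub>2) \<in> M" "Cn cons {\<phi>, \<chi>\<^sub>2} = UNIV"
    by blast
  have "(\<alpha>, dj \<chi>\<^sub>1 \<chi>\<^sub>2) \<in> M" "(\<beta>, dj \<chi>\<^sub>1 \<chi>\<^sub>2) \<in> M"
    using \<open>rule_WO cons M\<close> \<chi>\<^sub>1(1) \<chi>\<^sub>2(1) cons_disj_left[OF disj] cons_disj_right[OF disj]
    unfolding rule_WO_def by blast+
  then have "(dj \<alpha> \<beta>, dj \<chi>\<^sub>1 \<chi>\<^sub>2) \<in> M"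
    using \<open>rule_OR dj M\<close> unfolding rule_OR_def by blast
  moreover have "Cn cons {dj \<chi>\<^sub>1 \<chi>\<^sub>2, \<phi>} = UNIV"
    by (rule inconsistent_disj[OF disj]) (use \<chi>\<^sub>1(2) \<chi>\<^sub>2(2) in \<open>simp_all add: insert_commute\<close>)
  ultimately show "\<exists>\<chi>. (dj \<alpha> \<beta>, \<chi>) \<in> M \<and> Cn cons {\<phi>, \<chi>} = UNIV"
    by (metis insert_commute)
qed

end

theorem corollary4p6:
  fixes cons :: "'f set \<Rightarrow> 'f \<Rightarrow> bool"
    and cj dj :: "'f \<Rightarrow> 'f \<Rightarrow> 'f"
    and fb ft :: 'f
    and N :: "('f \<times> 'f) set"
  assumes "tarskian cons"
    and "conj_P cons cj" and "disj_S cons dj"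
    and "bot_P cons fb" and "top_W cons ft"
  defines "P1c \<equiv> - Perm cons (N1 cons cj ft N)"
    and "P2c \<equiv> - Perm cons (N2 cons cj dj ft N)"
    and "P3c \<equiv> - Perm cons (N3 cons cj ft N)"
    and "P4c \<equiv> - Perm cons (N4 cons cj dj ft N)"
  shows "(drule_top ft fb P1c \<and> drule_SI cons P1c \<and> drule_WO cons P1c \<and> drule_AND dj P1c)
    \<and> (drule_top ft fb P2c \<and> drule_SI cons P2c \<and> drule_WO cons P2c \<and> drule_AND dj P2c
         \<and> drule_OR dj P2c)
    \<and> (drule_top ft fb P3c \<and> drule_SI cons P3c \<and> drule_WO cons P3c \<and> drule_AND dj P3c
         \<and> drule_CT cj (N3 cons cj ft N) P3c)
    \<and> (drule_top ft fb P4c \<and> drule_SI cons P4c \<and> drule_WO cons P4c \<and> drule_AND dj P4c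
         \<and> drule_OR dj P4c \<and> drule_CT cj (N4 cons cj dj ft N) P4c)"
  unfolding P1c_def P2c_def P3c_def P4c_def
  using N1_closed[of ft cons cj N] N2_closed[of ft cons cj dj N]
    N3_closed[of ft cons cj N] N4_closed[of ft cons cj dj N]
    drule_top_Compl_Perm[OF assms(1,4)] drule_SI_Compl_Perm
    drule_WO_Compl_Perm[OF assms(1)] drule_AND_Compl_Perm[OF assms(1-3)]
    drule_OR_Compl_Perm[OF assms(1,3)] drule_CT_Compl_Perm
  by blast

end
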